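(* Let $n\ge 3$ and consider the cycle graph on nodes $1,\dots,n$ with arbitrary measurements $\widetilde{R}_{12},\dots,\widetilde{R}_{n-1,n},\widetilde{R}_{n1}\in\mathrm{SO}(3)$, and let $\gamma\in[-\pi,\pi]$ be the rotation angle of the cycle error $E$. Then the set of eigenvalues of $\widetilde{R}$ is $$\sigma(\widetilde{R})=\big\{1+2\cos(\gamma/n-2k\pi/n)\big\}_{k=0,\dots,n-1}\ \cup\ \big\{1+2\cos(2k\pi/n)\big\}_{k=0,\dots,n-1}.$$
   Context: Cycle-graph setup: nodes $1,\dots,n$ ($n\ge3$), edges $\{i,i+1\}$ for $i=1,\dots,n-1$ and $\{n,1\}$; write $i\sim j$ for an edge. Measurements $\widetilde{R}_{ij}\in\mathrm{SO}(3)$ on edges with $\widetilde{R}_{ji}=\widetilde{R}_{ij}^\top$. The symmetric $3n\times3n$ block matrix $\widetilde{R}$ has $(i,j)$ $3\times3$ block $I_3$ if $i=j$, $\widetilde{R}_{ij}$ if $i\sim j$, and $0$ otherwise. The cycle error is $E:=\widetilde{R}_{12}\widetilde{R}_{23}\cdots\widetilde{R}_{n-1,n}\widetilde{R}_{n1}\in\mathrm{SO}(3)$ (product left to right), and $\gamma=\angle(E)\in[-\pi,\pi]$ is its rotation angle, i.e. $E=\exp(\gamma[\hat n]_\times)$ for a unit axis $\hat n$. *)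

theory Defs
  imports Complex_Main "Jordan_Normal_Form.Char_Poly"
begin

definition SO3 :: "real mat set" where
  "SO3 = {Q. Q \<in> carrier_mat 3 3 \<and> transpose_mat Q * Q = 1\<^sub>m 3 \<and> det Q = 1}"

text \<open>Measurements: Rm i is the measurement on edge (i, i+1) for i = 1..n-1,
  and Rm n is the measurement on edge (n, 1).  The reverse-direction
  measurements are the transposes.\<close>

text \<open>The 3x3 block (p,q) of the big matrix, with 0-based block indices
  p, q in 0..n-1 (block p corresponds to node p+1).\<close>
definition cycle_block :: "nat \<Rightarrow> (nat \<Rightarrow> real mat) \<Rightarrow> nat \<Rightarrow> nat \<Rightarrow> real mat" where
  "cycle_block n Rm p q =
     (if p = q then 1\<^sub>m 3
      else if q = (p + 1) mod n then Rm (p + 1)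
      else if p = (q + 1) mod n then transpose_mat (Rm (q + 1))
      else 0\<^sub>m 3 3)"

definition cycle_matrix :: "nat \<Rightarrow> (nat \<Rightarrow> real mat) \<Rightarrow> real mat" where
  "cycle_matrix n Rm = mat (3 * n) (3 * n)
     (\<lambda>(a, b). cycle_block n Rm (a div 3) (b div 3) $$ (a mod 3, b mod 3))"

definition cycle_error :: "nat \<Rightarrow> (nat \<Rightarrow> real mat) \<Rightarrow> real mat" where
  "cycle_error n Rm = foldl (*) (1\<^sub>m 3) (map Rm [1..<n+1])"

definition hat3 :: "real vec \<Rightarrow> real mat" where
  "hat3 v = mat_of_rows_list 3
     [[0, - (v $ 2), v $ 1],
      [v $ 2, 0, - (v $ 0)],
      [- (v $ 1), v $ 0, 0]]"

text \<open>exp(t [u]_x) for a unit axis u, written in closed (Rodrigues) form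
  I + sin t K + (1 - cos t) K^2, which equals the matrix exponential series.\<close>
definition rot_exp :: "real \<Rightarrow> real vec \<Rightarrow> real mat" where
  "rot_exp t u = 1\<^sub>m 3 + sin t \<cdot>\<^sub>m hat3 u + (1 - cos t) \<cdot>\<^sub>m (hat3 u * hat3 u)"

definition is_rotation_angle :: "real mat \<Rightarrow> real \<Rightarrow> bool" where
  "is_rotation_angle E \<gamma> \<longleftrightarrow> - pi \<le> \<gamma> \<and> \<gamma> \<le> pi \<and>
     (\<exists>u. u \<in> carrier_vec 3 \<and> (u $ 0)\<^sup>2 + (u $ 1)\<^sup>2 + (u $ 2)\<^sup>2 = 1 \<and> E = rot_exp \<gamma> u)"

end

theory Submission
  imports Defs
begin

(*
  Let S be the twisted shift (S x)_p = R_{p,p+1} x_{p+1} on blocks x = (x_1, ..., x_n) in (C^3)^n,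
  indices taken mod n. Since the measurements are orthogonal, S is unitary and the block matrix is
  R~ = 1 + S + S^-1. Following a solution of S x = k x once around the cycle shows that
  E x_1 = k^n x_1, and conversely every eigenvector of E spreads along the cycle to an eigenvector
  of S; so the eigenvalues of S are the k with k^n in spec(E) = {1, e^(i gamma), e^(-i gamma)}.
  As R~ - l = S^-1 (S - m) (S - 1/m) whenever l = 1 + m + 1/m, the eigenvalues of R~ are exactly
  the numbers 1 + k + 1/k = 1 + 2 cos(arg k) for these k.
*)

lemma less_3_cases: "(i::nat) < 3 \<longleftrightarrow> i = 0 \<or> i = Suc 0 \<or> i = 2"
  by auto

lemma sum_3: "(\<Sum>i\<in>{0..<3::nat}. f i) = f 0 + f 1 + f 2"
  by (simp add: numeral_3_eq_3 eval_nat_numeral)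

lemma eigenvalue_carrier_iff:
  assumes "A \<in> carrier_mat n n"
  shows "eigenvalue A k \<longleftrightarrow> (\<exists>v. v \<in> carrier_vec n \<and> v \<noteq> 0\<^sub>v n \<and> A *\<^sub>v v = k \<cdot>\<^sub>v v)"
  using assms unfolding eigenvalue_def eigenvector_def by auto

definition cross :: "real vec \<Rightarrow> complex vec \<Rightarrow> complex vec" where
  "cross u x = vec 3 (\<lambda>i.
     if i = 0 then of_real (u$1) * x$2 - of_real (u$2) * x$1
     else if i = 1 then of_real (u$2) * x$0 - of_real (u$0) * x$2
     else of_real (u$0) * x$1 - of_real (u$1) * x$0)"

lemma cross_carrier [simp]: "cross u x \<in> carrier_vec 3" "dim_vec (cross u x) = 3"
  by (auto simp: cross_def)

lemma cross_index [simp]: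
  "cross u x $ 0 = of_real (u$1) * x$2 - of_real (u$2) * x$1"
  "cross u x $ Suc 0 = of_real (u$2) * x$0 - of_real (u$0) * x$2"
  "cross u x $ 2 = of_real (u$0) * x$1 - of_real (u$1) * x$0"
  by (auto simp: cross_def)

lemma hat3_carrier: "hat3 u \<in> carrier_mat 3 3"
  by (simp add: hat3_def mat_of_rows_list_def numeral_3_eq_3)

lemma rot_exp_carrier: "rot_exp g u \<in> carrier_mat 3 3"
  unfolding rot_exp_def using hat3_carrier[of u]
  by (intro add_carrier_mat smult_carrier_mat mult_carrier_mat one_carrier_mat)

lemma rot_exp_mult_vec:
  assumes "x \<in> carrier_vec 3"
  shows "map_mat complex_of_real (rot_exp g u) *\<^sub>v x
     = x + of_real (sin g) \<cdot>\<^sub>v cross u x + of_real (1 - cos g) \<cdot>\<^sub>v cross u (cross u x)"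
  using assms
  by (intro eq_vecI) (auto simp: less_3_cases rot_exp_def hat3_def mat_of_rows_list_def
      scalar_prod_def sum_3 row_def col_def algebra_simps)

lemma cross_add: "x \<in> carrier_vec 3 \<Longrightarrow> y \<in> carrier_vec 3 \<Longrightarrow> cross u (x + y) = cross u x + cross u y"
  by (intro eq_vecI) (auto simp: less_3_cases algebra_simps)

lemma cross_smult: "x \<in> carrier_vec 3 \<Longrightarrow> cross u (c \<cdot>\<^sub>v x) = c \<cdot>\<^sub>v cross u x"
  by (intro eq_vecI) (auto simp: less_3_cases algebra_simps)

lemma cross_uminus: "x \<in> carrier_vec 3 \<Longrightarrow> cross u (- x) = - cross u x"
  by (intro eq_vecI) (auto simp: less_3_cases algebra_simps)

lemma cross_cross_cross:
  assumes "x \<in> carrier_vec 3"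
  shows "cross u (cross u (cross u x)) = - of_real ((u$0)\<^sup>2 + (u$1)\<^sup>2 + (u$2)\<^sup>2) \<cdot>\<^sub>v cross u x"
proof (rule eq_vecI)
  fix i assume "i < dim_vec (- of_real ((u$0)\<^sup>2 + (u$1)\<^sup>2 + (u$2)\<^sup>2) \<cdot>\<^sub>v cross u x)"
  then consider "i = 0" | "i = 1" | "i = 2" by force
  then show "cross u (cross u (cross u x)) $ i
      = (- of_real ((u$0)\<^sup>2 + (u$1)\<^sup>2 + (u$2)\<^sup>2) \<cdot>\<^sub>v cross u x) $ i"
    by cases (simp_all only: cross_index index_uminus_vec index_smult_vec cross_carrier One_nat_def,
        simp_all add: power2_eq_square algebra_simps)
qed simp

lemma cross_cross_cross_unit:
  assumes "(u$0)\<^sup>2 + (u$1)\<^sup>2 + (u$2)\<^sup>2 = 1" and "x \<in> carrier_vec 3"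
  shows "cross u (cross u (cross u x)) = - cross u x"
  using cross_cross_cross[OF assms(2), of u] unfolding assms(1) by (intro eq_vecI) auto

lemma rotation_block_eigenvalue:
  fixes C s c \<alpha> \<beta> :: complex
  assumes "C * \<alpha> + s * \<beta> = c * \<alpha>" "C * \<beta> - s * \<alpha> = c * \<beta>" "\<alpha> \<noteq> 0"
  shows "c = C + \<i> * s \<or> c = C - \<i> * s"
proof -
  have "((C - c)\<^sup>2 + s\<^sup>2) * \<alpha> = (C - c) * ((C - c) * \<alpha> + s * \<beta>) - s * ((C - c) * \<beta> - s * \<alpha>)"
    by (simp add: power2_eq_square algebra_simps)
  also have "\<dots> = 0" using assms(1,2) by (simp add: algebra_simps)
  finally have "(C - c)\<^sup>2 + s\<^sup>2 = 0" using assms(3) by simp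
  moreover have "(c - (C + \<i> * s)) * (c - (C - \<i> * s)) = (C - c)\<^sup>2 + s\<^sup>2"
    by (simp add: power2_eq_square algebra_simps)
  ultimately show ?thesis by simp
qed

lemma rot_exp_eigenvalue_cases:
  assumes u: "(u$0)\<^sup>2 + (u$1)\<^sup>2 + (u$2)\<^sup>2 = 1"
    and ev: "eigenvalue (map_mat complex_of_real (rot_exp g u)) c"
  shows "c = 1 \<or> c = cis g \<or> c = cis (-g)"
proof -
  obtain x where x: "x \<in> carrier_vec 3" "x \<noteq> 0\<^sub>v 3"
    and Ex: "map_mat complex_of_real (rot_exp g u) *\<^sub>v x = c \<cdot>\<^sub>v x"
    using ev eigenvalue_carrier_iff[OF map_carrier_mat[THEN iffD2, OF rot_exp_carrier]] by blast
  define s where "s = complex_of_real (sin g)"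
  define C where "C = complex_of_real (cos g)"
  define a where "a = cross u x"
  define b where "b = cross u a"
  have a: "a \<in> carrier_vec 3" and b: "b \<in> carrier_vec 3" unfolding a_def b_def by auto
  have Kb: "cross u b = - a" unfolding a_def b_def using cross_cross_cross_unit[OF u x(1)] .
  have e0: "x + s \<cdot>\<^sub>v a + (1 - C) \<cdot>\<^sub>v b = c \<cdot>\<^sub>v x"
    using Ex rot_exp_mult_vec[OF x(1), of g u] unfolding s_def C_def a_def b_def by simp
  then have "cross u (x + s \<cdot>\<^sub>v a + (1 - C) \<cdot>\<^sub>v b) = cross u (c \<cdot>\<^sub>v x)" by simp
  then have e1: "a + s \<cdot>\<^sub>v b + (1 - C) \<cdot>\<^sub>v (- a) = c \<cdot>\<^sub>v a"
    using a b x by (simp add: cross_add cross_smult Kb a_def[symmetric] b_def[symmetric])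
  then have "cross u (a + s \<cdot>\<^sub>v b + (1 - C) \<cdot>\<^sub>v (- a)) = cross u (c \<cdot>\<^sub>v a)" by simp
  then have e2: "b + s \<cdot>\<^sub>v (- a) + (1 - C) \<cdot>\<^sub>v (- b) = c \<cdot>\<^sub>v b"
    using a b x by (simp add: cross_add cross_smult Kb cross_uminus b_def[symmetric])
  show ?thesis
  proof (cases "a = 0\<^sub>v 3")
    case True
    then have "b = 0\<^sub>v 3" unfolding b_def by (intro eq_vecI) (auto simp: less_3_cases)
    obtain j where j: "j < 3" "x$j \<noteq> 0" using x by (metis eq_vecI carrier_vecD index_zero_vec(1,2))
    have "x$j = c * x$j"
      using arg_cong[OF e0, of "\<lambda>v. v$j"] True \<open>b = 0\<^sub>v 3\<close> j(1) x(1) by simp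
    then have "c = 1" using j(2) by simp
    then show ?thesis by simp
  next
    case False
    then obtain j where j: "j < 3" "a$j \<noteq> 0" using a by (metis eq_vecI carrier_vecD index_zero_vec(1,2))
    have "C * a$j + s * b$j = c * a$j" "C * b$j - s * a$j = c * b$j"
      using arg_cong[OF e1, of "\<lambda>v. v$j"] arg_cong[OF e2, of "\<lambda>v. v$j"] j(1) a b
      by (simp_all add: algebra_simps)
    then have "c = C + \<i> * s \<or> c = C - \<i> * s" using j(2) by (rule rotation_block_eigenvalue)
    moreover have "cis g = C + \<i> * s" "cis (-g) = C - \<i> * s"
      unfolding C_def s_def by (auto simp: complex_eq_iff)
    ultimately show ?thesis by auto
  qed
qed

lemma rot_exp_eigenvalue_1:
  assumes u: "(u$0)\<^sup>2 + (u$1)\<^sup>2 + (u$2)\<^sup>2 = 1" "u \<in> carrier_vec 3"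
  shows "eigenvalue (map_mat complex_of_real (rot_exp g u)) 1"
proof -
  let ?x = "map_vec complex_of_real u"
  have x: "?x \<in> carrier_vec 3" using u(2) by simp
  have "?x \<noteq> 0\<^sub>v 3"
  proof
    assume "?x = 0\<^sub>v 3"
    then have "u $ i = 0" if "i < 3" for i using that u(2) by (metis index_map_vec(1) index_zero_vec(1) of_real_eq_0_iff carrier_vecD)
    then show False using u(1) by simp
  qed
  moreover have "map_mat complex_of_real (rot_exp g u) *\<^sub>v ?x = 1 \<cdot>\<^sub>v ?x"
  proof -
    have "cross u ?x = 0\<^sub>v 3"
      using u(2) by (intro eq_vecI) (auto simp: less_3_cases algebra_simps)
    moreover have "cross u (0\<^sub>v 3) = 0\<^sub>v 3"
      by (intro eq_vecI) (auto simp: less_3_cases)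
    ultimately show ?thesis using rot_exp_mult_vec[OF x, of g u] x by (intro eq_vecI) auto
  qed
  ultimately show ?thesis
    using x unfolding eigenvalue_carrier_iff[OF map_carrier_mat[THEN iffD2, OF rot_exp_carrier]] by blast
qed

text \<open>For \<open>t = \<plusminus>\<i>\<close>, the vector \<open>u \<times> (u \<times> w) + t (u \<times> w)\<close> is annihilated by \<open>u \<times> _ - t\<close>, so
  the rotation acts on it by \<open>cos g + t sin g\<close>; it is nonzero for a basis vector \<open>w = e\<^sub>j\<close> with
  \<open>u\<^sub>j\<^sup>2 \<noteq> 1\<close>.\<close>
lemma rot_exp_eigenvalue_cos_sin:
  assumes u: "(u$0)\<^sup>2 + (u$1)\<^sup>2 + (u$2)\<^sup>2 = 1" and t: "t * t = -1"
  shows "eigenvalue (map_mat complex_of_real (rot_exp g u)) (of_real (cos g) + t * of_real (sin g))"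
proof -
  obtain j :: nat where j: "j < 3" "(u$j)\<^sup>2 \<noteq> 1"
  proof (cases "(u$0)\<^sup>2 = 1")
    case True
    then have "(u$1)\<^sup>2 = 0" using u by (smt (verit) zero_le_power2)
    then show ?thesis using that[of 1] by simp
  qed (use that[of 0] in simp)
  have tt: "t * (t * y) = - y" for y
    using t by (simp flip: mult.assoc)
  define w :: "complex vec" where "w = unit_vec 3 j"
  define a where "a = cross u w"
  define b where "b = cross u a"
  define z where "z = b + t \<cdot>\<^sub>v a"
  have w: "w \<in> carrier_vec 3" and a: "a \<in> carrier_vec 3" and b: "b \<in> carrier_vec 3"
    and z: "z \<in> carrier_vec 3"
    unfolding w_def a_def b_def z_def by auto
  have Kb: "cross u b = - a" unfolding a_def b_def using cross_cross_cross_unit[OF u w] .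
  have Kz: "cross u z = - a + t \<cdot>\<^sub>v b"
    unfolding z_def using a b by (simp add: cross_add cross_smult Kb b_def[symmetric])
  have KKz: "cross u (cross u z) = - b - t \<cdot>\<^sub>v a"
    unfolding Kz using a b
    by (simp add: cross_add cross_smult cross_uminus Kb b_def[symmetric]) (intro eq_vecI, auto)
  have "map_mat complex_of_real (rot_exp g u) *\<^sub>v z
      = z + of_real (sin g) \<cdot>\<^sub>v (- a + t \<cdot>\<^sub>v b) + of_real (1 - cos g) \<cdot>\<^sub>v (- b - t \<cdot>\<^sub>v a)"
    unfolding rot_exp_mult_vec[OF z] KKz unfolding Kz ..
  also have "\<dots> = (of_real (cos g) + t * of_real (sin g)) \<cdot>\<^sub>v z"
    using a b unfolding z_def by (intro eq_vecI) (simp_all add: algebra_simps tt)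
  finally have "map_mat complex_of_real (rot_exp g u) *\<^sub>v z = (of_real (cos g) + t * of_real (sin g)) \<cdot>\<^sub>v z" .
  moreover have "z $ j \<noteq> 0"
  proof -
    have "z $ j = complex_of_real ((u$j)\<^sup>2 - ((u$0)\<^sup>2 + (u$1)\<^sup>2 + (u$2)\<^sup>2))"
      using j(1) unfolding z_def b_def a_def w_def
      by (auto simp: less_3_cases power2_eq_square algebra_simps)
    also have "\<dots> = complex_of_real ((u$j)\<^sup>2 - 1)" unfolding u ..
    finally show ?thesis using j(2) by (simp only: of_real_eq_0_iff)
  qed
  then have "z \<noteq> 0\<^sub>v 3" using j(1) by auto
  ultimately show ?thesis
    using z unfolding eigenvalue_carrier_iff[OF map_carrier_mat[THEN iffD2, OF rot_exp_carrier]] by auto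
qed

lemma rot_exp_spectrum:
  assumes "(u$0)\<^sup>2 + (u$1)\<^sup>2 + (u$2)\<^sup>2 = 1" "u \<in> carrier_vec 3"
  shows "{c. eigenvalue (map_mat complex_of_real (rot_exp g u)) c} = {1, cis g, cis (-g)}"
proof -
  have "cis g = of_real (cos g) + \<i> * of_real (sin g)"
    and "cis (-g) = of_real (cos g) + (- \<i>) * of_real (sin g)"
    by (simp_all add: complex_eq_iff)
  then show ?thesis
    using rot_exp_eigenvalue_cases[OF assms(1)] rot_exp_eigenvalue_1[OF assms]
      rot_exp_eigenvalue_cos_sin[OF assms(1), of \<i> g] rot_exp_eigenvalue_cos_sin[OF assms(1), of "- \<i>" g]
    by auto
qed

lemma cis_add_inverse: "1 + cis \<phi> + 1 / cis \<phi> = complex_of_real (1 + 2 * cos \<phi>)"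
  by (simp add: complex_eq_iff divide_complex_def)

lemma cos_shift_multiple_reduce:
  assumes n: "n > 0"
  shows "\<exists>k<n. cos ((a + 2 * pi * of_int m) / real n) = cos ((a + 2 * pi * real k) / real n)"
proof -
  define k where "k = nat (m mod int n)"
  define t where "t = m div int n"
  have kn: "k < n" unfolding k_def using n by (simp add: nat_less_iff)
  have "m = int k + int n * t" unfolding k_def t_def using n by simp
  then have "of_int m = real k + real n * of_int t"
    by (metis of_int_add of_int_mult of_int_of_nat_eq)
  then have "(a + 2 * pi * of_int m) / real n = (a + 2 * pi * real k) / real n + 2 * pi * of_int t"
    using n by (simp add: field_simps)
  then have "cos ((a + 2 * pi * of_int m) / real n) = cos ((a + 2 * pi * real k) / real n)"
    by (simp add: cos_add)
  then show ?thesis using kn by blast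
qed

lemma nth_root_of_cis:
  assumes h: "\<kappa> ^ n = cis \<theta>" and n: "n > 0"
  shows "\<exists>k<n. 1 + \<kappa> + 1 / \<kappa> = complex_of_real (1 + 2 * cos ((\<theta> + 2 * pi * real k) / real n))"
proof -
  have "norm \<kappa> ^ n = 1 ^ n" using arg_cong[OF h, of norm] by (simp add: norm_power)
  then have "norm \<kappa> = 1" using power_eq_iff_eq_base[OF n] by (metis norm_ge_zero zero_le_one)
  moreover from this have "\<kappa> \<noteq> 0" by auto
  ultimately have kc: "\<kappa> = cis (Arg \<kappa>)" using cis_Arg[of \<kappa>] by (simp add: sgn_div_norm)
  then have "cis (real n * Arg \<kappa>) = cis \<theta>" using h DeMoivre by metis
  then have "sin (real n * Arg \<kappa>) = sin \<theta> \<and> cos (real n * Arg \<kappa>) = cos \<theta>"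
    by (metis cis.sel(1) cis.sel(2))
  then obtain m :: int where "real n * Arg \<kappa> = \<theta> + 2 * pi * of_int m" using sin_cos_eq_iff by blast
  then have "Arg \<kappa> = (\<theta> + 2 * pi * of_int m) / real n" using n by (simp add: field_simps)
  then have "\<kappa> = cis ((\<theta> + 2 * pi * of_int m) / real n)" using kc by metis
  moreover obtain k where "k < n"
    "cos ((\<theta> + 2 * pi * of_int m) / real n) = cos ((\<theta> + 2 * pi * real k) / real n)"
    using cos_shift_multiple_reduce[OF n] by blast
  ultimately show ?thesis by (metis cis_add_inverse)
qed

lemma cis_nth_power_multiple:
  assumes "n > 0"
  shows "cis ((\<theta> + 2 * pi * real k) / real n) ^ n = cis \<theta>"
proof -
  have "cis ((\<theta> + 2 * pi * real k) / real n) ^ n = cis (\<theta> + 2 * pi * real k)"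
    using assms by (simp add: DeMoivre)
  also have "\<dots> = cis \<theta> * cis (2 * pi * real k)" by (simp only: cis_mult)
  also have "\<dots> = cis \<theta>" by (simp add: cis_multiple_2pi)
  finally show ?thesis .
qed

lemma add_inverse_image_nth_roots_cis:
  assumes n: "n > 0"
  shows "(\<lambda>\<kappa>. 1 + \<kappa> + 1 / \<kappa>) ` {\<kappa>. \<kappa> ^ n = cis \<theta>}
       = (\<lambda>k. complex_of_real (1 + 2 * cos ((\<theta> + 2 * pi * real k) / real n))) ` {0..<n}"
proof (intro equalityI subsetI)
  fix z assume "z \<in> (\<lambda>\<kappa>. 1 + \<kappa> + 1 / \<kappa>) ` {\<kappa>. \<kappa> ^ n = cis \<theta>}"
  then obtain \<kappa> where z: "z = 1 + \<kappa> + 1 / \<kappa>" and "\<kappa> \<in> {\<kappa>. \<kappa> ^ n = cis \<theta>}"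
    by (rule imageE)
  then obtain k where "k < n" "z = complex_of_real (1 + 2 * cos ((\<theta> + 2 * pi * real k) / real n))"
    using nth_root_of_cis[OF _ n] unfolding z by blast
  then show "z \<in> (\<lambda>k. complex_of_real (1 + 2 * cos ((\<theta> + 2 * pi * real k) / real n))) ` {0..<n}"
    by (intro image_eqI) simp_all
next
  fix z assume "z \<in> (\<lambda>k. complex_of_real (1 + 2 * cos ((\<theta> + 2 * pi * real k) / real n))) ` {0..<n}"
  then obtain k where z: "z = complex_of_real (1 + 2 * cos ((\<theta> + 2 * pi * real k) / real n))"
    by (rule imageE)
  define \<kappa> where "\<kappa> = cis ((\<theta> + 2 * pi * real k) / real n)"
  have "\<kappa> ^ n = cis \<theta>" unfolding \<kappa>_def by (rule cis_nth_power_multiple[OF n])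
  moreover have "z = 1 + \<kappa> + 1 / \<kappa>" unfolding z \<kappa>_def cis_add_inverse ..
  ultimately show "z \<in> (\<lambda>\<kappa>. 1 + \<kappa> + 1 / \<kappa>) ` {\<kappa>. \<kappa> ^ n = cis \<theta>}" by (intro image_eqI) simp_all
qed

lemma add_inverse_image_nth_roots_cis_uminus:
  "(\<lambda>\<kappa>. 1 + \<kappa> + 1 / \<kappa>) ` {\<kappa>. \<kappa> ^ n = cis (-\<theta>)} \<subseteq> (\<lambda>\<kappa>. 1 + \<kappa> + 1 / \<kappa>) ` {\<kappa>. \<kappa> ^ n = cis \<theta>}"
proof
  fix z assume "z \<in> (\<lambda>\<kappa>. 1 + \<kappa> + 1 / \<kappa>) ` {\<kappa>. \<kappa> ^ n = cis (-\<theta>)}"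
  then obtain \<kappa> where z: "z = 1 + \<kappa> + 1 / \<kappa>" and "\<kappa> \<in> {\<kappa>. \<kappa> ^ n = cis (-\<theta>)}"
    by (rule imageE)
  then have "(1 / \<kappa>) ^ n = inverse (cis (-\<theta>))" by (simp add: power_one_over inverse_eq_divide)
  then have "1 / \<kappa> \<in> {\<kappa>. \<kappa> ^ n = cis \<theta>}" by simp
  moreover have "z = 1 + 1 / \<kappa> + 1 / (1 / \<kappa>)" unfolding z by simp
  ultimately show "z \<in> (\<lambda>\<kappa>. 1 + \<kappa> + 1 / \<kappa>) ` {\<kappa>. \<kappa> ^ n = cis \<theta>}" by (intro image_eqI)
qed

text \<open>The roots of \<open>cis g\<close> contribute nothing new: inverting them gives the roots of \<open>cis (-g)\<close>.\<close>
lemma add_inverse_image_nth_roots: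
  assumes n: "n > 0"
  shows "(\<lambda>\<kappa>. 1 + \<kappa> + 1 / \<kappa>) ` {\<kappa>. \<kappa> ^ n \<in> {1, cis g, cis (-g)}} =
         (\<lambda>k. complex_of_real (1 + 2 * cos (g / real n - 2 * real k * pi / real n))) ` {0..<n}
       \<union> (\<lambda>k. complex_of_real (1 + 2 * cos (2 * real k * pi / real n))) ` {0..<n}"
proof -
  let ?f = "\<lambda>\<kappa>. 1 + \<kappa> + 1 / \<kappa>"
  have "{\<kappa>. \<kappa> ^ n \<in> {1, cis g, cis (-g)}}
      = {\<kappa>. \<kappa> ^ n = cis (-g)} \<union> {\<kappa>. \<kappa> ^ n = cis 0} \<union> {\<kappa>. \<kappa> ^ n = cis (- (-g))}"
    by auto
  then have "?f ` {\<kappa>. \<kappa> ^ n \<in> {1, cis g, cis (-g)}}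
      = ?f ` {\<kappa>. \<kappa> ^ n = cis (-g)} \<union> ?f ` {\<kappa>. \<kappa> ^ n = cis 0} \<union> ?f ` {\<kappa>. \<kappa> ^ n = cis (- (-g))}"
    by (simp only: image_Un)
  also have "\<dots> = ?f ` {\<kappa>. \<kappa> ^ n = cis (-g)} \<union> ?f ` {\<kappa>. \<kappa> ^ n = cis 0}"
    using add_inverse_image_nth_roots_cis_uminus[of n "-g"] by blast
  also have "?f ` {\<kappa>. \<kappa> ^ n = cis (-g)}
      = (\<lambda>k. complex_of_real (1 + 2 * cos (g / real n - 2 * real k * pi / real n))) ` {0..<n}"
  proof -
    have "cos ((- g + 2 * pi * real k) / real n) = cos (g / real n - 2 * real k * pi / real n)" for k
    proof -
      have "(- g + 2 * pi * real k) / real n = - (g / real n - 2 * real k * pi / real n)"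
        using n by (simp add: field_simps)
      then show ?thesis by (metis cos_minus)
    qed
    then show ?thesis unfolding add_inverse_image_nth_roots_cis[OF n] by (simp only:)
  qed
  also have "?f ` {\<kappa>. \<kappa> ^ n = cis 0} = (\<lambda>k. complex_of_real (1 + 2 * cos (2 * real k * pi / real n))) ` {0..<n}"
    unfolding add_inverse_image_nth_roots_cis[OF n] by (simp add: mult_ac)
  finally show ?thesis .
qed

lemma sum_lessThan_3_mult:
  fixes f :: "nat \<Rightarrow> 'a::comm_monoid_add"
  shows "(\<Sum>a<3 * m. f a) = (\<Sum>q<m. f (3 * q) + f (3 * q + 1) + f (3 * q + 2))"
proof (induction m)
  case (Suc m)
  have "{..<3 * Suc m} = {..<3 * m} \<union> {3 * m, 3 * m + 1, 3 * m + 2}" by auto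
  then have "(\<Sum>a<3 * Suc m. f a) = (\<Sum>a<3 * m. f a) + (f (3 * m) + f (3 * m + 1) + f (3 * m + 2))"
    by (simp add: sum.union_disjoint add_ac)
  then show ?case using Suc by simp
qed simp

lemma mult_mat_vec_index_3:
  assumes "A \<in> carrier_mat 3 3" "i < 3" "w \<in> carrier_vec 3"
  shows "(A *\<^sub>v w) $ i = A $$ (i, 0) * w $ 0 + A $$ (i, 1) * w $ 1 + A $$ (i, 2) * w $ 2"
  using assms by (simp add: scalar_prod_def sum_3 row_def)

lemma exists_add_inverse_eq:
  fixes c :: complex
  shows "\<exists>\<mu>. \<mu> \<noteq> 0 \<and> \<mu> + 1 / \<mu> = c"
proof -
  define d where "d = csqrt (c\<^sup>2 - 4)"
  define \<mu> where "\<mu> = (c + d) / 2"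
  have "4 * (\<mu> * \<mu> - c * \<mu> + 1) = d\<^sup>2 - (c\<^sup>2 - 4)"
    unfolding \<mu>_def by (simp add: field_simps power2_eq_square)
  also have "\<dots> = 0" unfolding d_def by simp
  finally have quad: "\<mu> * \<mu> - c * \<mu> + 1 = 0" by (metis mult_eq_0_iff zero_neq_numeral)
  then have "\<mu> \<noteq> 0" by auto
  moreover from quad this have "\<mu> + 1 / \<mu> = c" by (simp add: field_simps)
  ultimately show ?thesis by blast
qed

lemma vec_add_add_eq_diff:
  fixes a b c d :: "'a::ab_group_add vec"
  assumes "a \<in> carrier_vec k" "b \<in> carrier_vec k" "c \<in> carrier_vec k" "d \<in> carrier_vec k"
    and "a + b + c = d"
  shows "b = d - a - c"
proof (rule eq_vecI)
  fix i assume "i < dim_vec (d - a - c)"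
  then have "i < k" using assms by simp
  moreover have "(a + b + c) $ i = d $ i" using assms(5) by simp
  ultimately show "b $ i = (d - a - c) $ i" using assms(1-4) by (simp add: algebra_simps)
qed (use assms in simp)

lemma vec_diff_eq_0_iff:
  fixes a b :: "'a::ab_group_add vec"
  assumes "a \<in> carrier_vec k" "b \<in> carrier_vec k"
  shows "a - b = 0\<^sub>v k \<longleftrightarrow> a = b"
proof
  assume "a - b = 0\<^sub>v k"
  then have "(a - b) $ i = 0" if "i < k" for i using that by simp
  then show "a = b" using assms by (intro eq_vecI) auto
qed (use assms in auto)

locale orthogonal_cycle =
  fixes n :: nat and Rm :: "nat \<Rightarrow> real mat"
  assumes three_le_n: "3 \<le> n"
    and Rm_orthogonal: "\<And>i. i \<in> {1..n} \<Longrightarrow> Rm i \<in> carrier_mat 3 3 \<and> transpose_mat (Rm i) * Rm i = 1\<^sub>m 3"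
begin

text \<open>Blocks are indexed from \<open>0\<close>: block \<open>p\<close> belongs to node \<open>p + 1\<close>, and \<open>R p\<close> is the measurement on
  the edge from block \<open>p\<close> to block \<open>nxt p\<close>.\<close>

definition R :: "nat \<Rightarrow> complex mat" where
  "R p = map_mat complex_of_real (Rm (p + 1))"

definition nxt :: "nat \<Rightarrow> nat" where
  "nxt p = (p + 1) mod n"

definition prv :: "nat \<Rightarrow> nat" where
  "prv p = (p + n - 1) mod n"

lemma R_carrier: "p < n \<Longrightarrow> R p \<in> carrier_mat 3 3"
  using Rm_orthogonal[of "p + 1"] by (simp add: R_def)

lemma R_orthogonal:
  assumes p: "p < n"
  shows "transpose_mat (R p) * R p = 1\<^sub>m 3" "R p * transpose_mat (R p) = 1\<^sub>m 3"
proof -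
  have c: "Rm (p + 1) \<in> carrier_mat 3 3" and o: "transpose_mat (Rm (p + 1)) * Rm (p + 1) = 1\<^sub>m 3"
    using Rm_orthogonal[of "p + 1"] p by auto
  have "transpose_mat (R p) * R p = map_mat complex_of_real (transpose_mat (Rm (p + 1)) * Rm (p + 1))"
    unfolding R_def map_mat_transpose using c by (simp add: of_real_hom.mat_hom_mult)
  also have "\<dots> = 1\<^sub>m 3" unfolding o by (simp add: of_real_hom.mat_hom_one)
  finally show left: "transpose_mat (R p) * R p = 1\<^sub>m 3" .
  show "R p * transpose_mat (R p) = 1\<^sub>m 3"
    using mat_mult_left_right_inverse[OF _ R_carrier[OF p] left] R_carrier[OF p] by simp
qed

lemma R_transpose_cancel:
  assumes p: "p < n" and x: "x \<in> carrier_vec 3"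
  shows "transpose_mat (R p) *\<^sub>v (R p *\<^sub>v x) = x" "R p *\<^sub>v (transpose_mat (R p) *\<^sub>v x) = x"
  using R_carrier[OF p] R_orthogonal[OF p] x
  by (simp_all flip: assoc_mult_mat_vec[of _ 3 3 _ 3])

lemma nxt_less: "nxt p < n"
  unfolding nxt_def using three_le_n by simp

lemma prv_less: "prv p < n"
  unfolding prv_def using three_le_n by simp

lemma nxt_eq: "p < n \<Longrightarrow> nxt p = (if p + 1 = n then 0 else p + 1)"
  unfolding nxt_def by auto

lemma prv_eq: "p < n \<Longrightarrow> prv p = (if p = 0 then n - 1 else p - 1)"
  unfolding prv_def using three_le_n by (cases "p = 0") (auto simp: mod_if)

lemma prv_nxt: "p < n \<Longrightarrow> prv (nxt p) = p"
  using three_le_n by (auto simp: nxt_eq prv_eq)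

lemma nxt_prv: "p < n \<Longrightarrow> nxt (prv p) = p"
  using three_le_n by (auto simp: nxt_eq prv_eq)

text \<open>This is where \<open>n \<ge> 3\<close> is needed.\<close>
lemma nxt_prv_distinct:
  assumes "p < n"
  shows "nxt p \<noteq> p" "prv p \<noteq> p" "nxt p \<noteq> prv p"
  using assms three_le_n by (auto simp: nxt_eq prv_eq split: if_splits)

lemma cycle_block_carrier:
  assumes "p < n" "q < n"
  shows "cycle_block n Rm p q \<in> carrier_mat 3 3"
  using assms Rm_orthogonal[of "p + 1"] Rm_orthogonal[of "q + 1"] unfolding cycle_block_def by auto

lemma cycle_block_simps:
  assumes p: "p < n"
  shows "cycle_block n Rm p p = 1\<^sub>m 3"
    and "cycle_block n Rm p (nxt p) = Rm (p + 1)"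
    and "cycle_block n Rm p (prv p) = transpose_mat (Rm (prv p + 1))"
    and "q < n \<Longrightarrow> q \<notin> {p, nxt p, prv p} \<Longrightarrow> cycle_block n Rm p q = 0\<^sub>m 3 3"
proof -
  show "cycle_block n Rm p p = 1\<^sub>m 3" unfolding cycle_block_def by simp
  show "cycle_block n Rm p (nxt p) = Rm (p + 1)"
    unfolding cycle_block_def using nxt_prv_distinct[OF p] by (simp add: nxt_def)
  have "prv p \<noteq> (p + 1) mod n" using nxt_prv_distinct[OF p] by (simp add: nxt_def)
  moreover have "p = (prv p + 1) mod n" using nxt_prv[OF p] by (simp add: nxt_def)
  ultimately show "cycle_block n Rm p (prv p) = transpose_mat (Rm (prv p + 1))"
    unfolding cycle_block_def using nxt_prv_distinct[OF p] by auto
  assume q: "q < n" "q \<notin> {p, nxt p, prv p}"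
  have "p \<noteq> (q + 1) mod n"
    using q prv_nxt[OF q(1)] unfolding nxt_def by auto
  then show "cycle_block n Rm p q = 0\<^sub>m 3 3" unfolding cycle_block_def using q by (simp add: nxt_def)
qed

definition M :: "complex mat" where
  "M = map_mat complex_of_real (cycle_matrix n Rm)"

definition block :: "complex vec \<Rightarrow> nat \<Rightarrow> complex vec" where
  "block v p = vec 3 (\<lambda>i. v $ (3 * p + i))"

definition glue :: "(nat \<Rightarrow> complex vec) \<Rightarrow> complex vec" where
  "glue x = vec (3 * n) (\<lambda>a. x (a div 3) $ (a mod 3))"

lemma block_carrier [simp]: "block v p \<in> carrier_vec 3" "dim_vec (block v p) = 3"
  by (auto simp: block_def)

lemma M_carrier: "M \<in> carrier_mat (3 * n) (3 * n)"
  by (simp add: M_def cycle_matrix_def)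

lemma glue_carrier: "glue x \<in> carrier_vec (3 * n)"
  by (simp add: glue_def)

lemma index_block: "a < 3 * n \<Longrightarrow> w $ a = block w (a div 3) $ (a mod 3)"
  unfolding block_def by simp

lemma block_glue:
  assumes "p < n" "x p \<in> carrier_vec 3"
  shows "block (glue x) p = x p"
proof (rule eq_vecI)
  fix i assume "i < dim_vec (x p)"
  then have i: "i < 3" using assms by simp
  then have "3 * p + i < 3 * n" "(3 * p + i) div 3 = p" "(3 * p + i) mod 3 = i"
    using assms by presburger+
  then show "block (glue x) p $ i = x p $ i" unfolding block_def glue_def using i by simp
qed (use assms in simp)

lemma block_smult: "v \<in> carrier_vec (3 * n) \<Longrightarrow> p < n \<Longrightarrow> block (c \<cdot>\<^sub>v v) p = c \<cdot>\<^sub>v block v p"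
  by (intro eq_vecI) (auto simp: block_def)

lemma eq_iff_blocks:
  assumes "v \<in> carrier_vec (3 * n)" "w \<in> carrier_vec (3 * n)"
  shows "v = w \<longleftrightarrow> (\<forall>p<n. block v p = block w p)"
proof
  assume blocks: "\<forall>p<n. block v p = block w p"
  show "v = w"
  proof (rule eq_vecI)
    fix a assume "a < dim_vec w"
    then have "a < 3 * n" using assms by simp
    then show "v $ a = w $ a" using blocks index_block[of a] by simp
  qed (use assms in simp)
qed simp

lemma block_nonzero:
  assumes v: "v \<in> carrier_vec (3 * n)" "v \<noteq> 0\<^sub>v (3 * n)"
  shows "\<exists>p<n. block v p \<noteq> 0\<^sub>v 3"
proof (rule ccontr)
  assume "\<not> (\<exists>p<n. block v p \<noteq> 0\<^sub>v 3)"
  moreover have "block (0\<^sub>v (3 * n)) p = 0\<^sub>v 3" if "p < n" for p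
    using that by (intro eq_vecI) (auto simp: block_def)
  ultimately have "\<forall>p<n. block v p = block (0\<^sub>v (3 * n)) p" by simp
  then show False using v eq_iff_blocks[of v "0\<^sub>v (3 * n)"] by simp
qed

lemma M_mult_vec_index:
  assumes v: "v \<in> carrier_vec (3 * n)" and p: "p < n" and i: "i < 3"
  shows "(M *\<^sub>v v) $ (3 * p + i)
      = (\<Sum>q<n. (map_mat complex_of_real (cycle_block n Rm p q) *\<^sub>v block v q) $ i)"
proof -
  define f where "f a = M $$ (3 * p + i, a) * v $ a" for a
  have "(M *\<^sub>v v) $ (3 * p + i) = (\<Sum>a<3 * n. f a)"
    using M_carrier v p i unfolding f_def by (simp add: scalar_prod_def atLeast0LessThan)
  also have "\<dots> = (\<Sum>q<n. f (3 * q) + f (3 * q + 1) + f (3 * q + 2))"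
    by (rule sum_lessThan_3_mult)
  also have "\<dots> = (\<Sum>q<n. (map_mat complex_of_real (cycle_block n Rm p q) *\<^sub>v block v q) $ i)"
  proof (rule sum.cong[OF refl])
    fix q assume "q \<in> {..<n}"
    then have q: "q < n" by simp
    note B = cycle_block_carrier[OF p q]
    have "3 * p + i < 3 * n" "3 * q < 3 * n" "3 * q + 1 < 3 * n" "3 * q + 2 < 3 * n"
      using p q i by auto
    moreover have "Suc (3 * q) div 3 = q" "Suc (3 * q) mod 3 = 1" "Suc (Suc (3 * q)) div 3 = q"
      "Suc (Suc (3 * q)) mod 3 = 2" "(3 * p + i) div 3 = p" "(3 * p + i) mod 3 = i"
      using i by presburger+
    ultimately show "f (3 * q) + f (3 * q + 1) + f (3 * q + 2)
        = (map_mat complex_of_real (cycle_block n Rm p q) *\<^sub>v block v q) $ i"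
      unfolding f_def mult_mat_vec_index_3[OF map_carrier_mat[THEN iffD2, OF B] i block_carrier(1)]
      using i by (simp add: M_def cycle_matrix_def block_def carrier_matD[OF B])
  qed
  finally show ?thesis .
qed

lemma sum_cycle_block_mult_vec:
  assumes p: "p < n" and i: "i < 3" and w: "\<And>q. w q \<in> carrier_vec 3"
  shows "(\<Sum>q<n. (map_mat complex_of_real (cycle_block n Rm p q) *\<^sub>v w q) $ i)
      = (w p + R p *\<^sub>v w (nxt p) + transpose_mat (R (prv p)) *\<^sub>v w (prv p)) $ i"
proof -
  define g where "g q = map_mat complex_of_real (cycle_block n Rm p q) *\<^sub>v w q" for q
  have "(\<Sum>q<n. g q $ i) = (\<Sum>q\<in>{p, nxt p, prv p}. g q $ i)"
  proof (rule sum.mono_neutral_right)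
    show "\<forall>q\<in>{..<n} - {p, nxt p, prv p}. g q $ i = 0"
    proof
      fix q assume "q \<in> {..<n} - {p, nxt p, prv p}"
      then have "map_mat complex_of_real (cycle_block n Rm p q) = 0\<^sub>m 3 3"
        using cycle_block_simps(4)[OF p] by (intro eq_matI) auto
      then show "g q $ i = 0" unfolding g_def using i w by (simp add: mult_mat_vec_index_3)
    qed
  qed (use p nxt_less prv_less in auto)
  also have "\<dots> = g p $ i + g (nxt p) $ i + g (prv p) $ i"
    using nxt_prv_distinct[OF p] by (simp add: add.assoc)
  also have "\<dots> = (w p + R p *\<^sub>v w (nxt p) + transpose_mat (R (prv p)) *\<^sub>v w (prv p)) $ i"
  proof -
    have "g p = w p" "g (nxt p) = R p *\<^sub>v w (nxt p)" "g (prv p) = transpose_mat (R (prv p)) *\<^sub>v w (prv p)"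
      unfolding g_def cycle_block_simps[OF p] R_def map_mat_transpose
      using w[of p] by (simp_all add: of_real_hom.mat_hom_one)
    then show ?thesis
      using i carrier_matD[OF R_carrier[OF p]] carrier_matD[OF R_carrier[OF prv_less[of p]]] by simp
  qed
  finally show ?thesis unfolding g_def .
qed

lemma block_M_mult_vec:
  assumes v: "v \<in> carrier_vec (3 * n)" and p: "p < n"
  shows "block (M *\<^sub>v v) p
      = block v p + R p *\<^sub>v block v (nxt p) + transpose_mat (R (prv p)) *\<^sub>v block v (prv p)"
proof (rule eq_vecI)
  fix i assume "i < dim_vec (block v p + R p *\<^sub>v block v (nxt p) + transpose_mat (R (prv p)) *\<^sub>v block v (prv p))"
  then have i: "i < 3" using R_carrier[OF prv_less[of p]] by simp
  then have "block (M *\<^sub>v v) p $ i = (M *\<^sub>v v) $ (3 * p + i)" by (simp add: block_def)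
  then show "block (M *\<^sub>v v) p $ i
      = (block v p + R p *\<^sub>v block v (nxt p) + transpose_mat (R (prv p)) *\<^sub>v block v (prv p)) $ i"
    unfolding M_mult_vec_index[OF v p i] sum_cycle_block_mult_vec[OF p i block_carrier(1)] .
qed (use R_carrier[OF prv_less[of p]] in simp)

lemma M_eigen_iff_blocks:
  assumes v: "v \<in> carrier_vec (3 * n)"
  shows "M *\<^sub>v v = l \<cdot>\<^sub>v v \<longleftrightarrow> (\<forall>p<n.
    block v p + R p *\<^sub>v block v (nxt p) + transpose_mat (R (prv p)) *\<^sub>v block v (prv p) = l \<cdot>\<^sub>v block v p)"
  using eq_iff_blocks[of "M *\<^sub>v v" "l \<cdot>\<^sub>v v"] M_carrier v
  by (simp add: block_M_mult_vec block_smult)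

primrec holonomy :: "nat \<Rightarrow> complex mat" where
  "holonomy 0 = 1\<^sub>m 3"
| "holonomy (Suc k) = holonomy k * R k"

lemma holonomy_carrier: "k \<le> n \<Longrightarrow> holonomy k \<in> carrier_mat 3 3"
proof (induction k)
  case (Suc k)
  then show ?case using R_carrier[of k] by (auto intro: mult_carrier_mat)
qed simp

lemma holonomy_orthogonal: "k \<le> n \<Longrightarrow> transpose_mat (holonomy k) * holonomy k = 1\<^sub>m 3"
proof (induction k)
  case (Suc k)
  then have k: "k < n" and H: "holonomy k \<in> carrier_mat 3 3" using holonomy_carrier by auto
  note Rk = R_carrier[OF k]
  have "transpose_mat (holonomy (Suc k)) * holonomy (Suc k)
      = transpose_mat (R k) * ((transpose_mat (holonomy k) * holonomy k) * R k)"
    using H Rk by (simp add: transpose_mult assoc_mult_mat[of _ 3 3 _ 3 _ 3])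
  also have "\<dots> = 1\<^sub>m 3" using Suc k Rk R_orthogonal[OF k] by simp
  finally show ?case .
qed simp

lemma of_real_cycle_error: "map_mat complex_of_real (cycle_error n Rm) = holonomy n"
proof -
  have "foldl (*) (1\<^sub>m 3) (map Rm [1..<k + 1]) \<in> carrier_mat 3 3 \<and>
      map_mat complex_of_real (foldl (*) (1\<^sub>m 3) (map Rm [1..<k + 1])) = holonomy k" if "k \<le> n" for k
    using that
  proof (induction k)
    case (Suc k)
    define F where "F = foldl (*) (1\<^sub>m 3) (map Rm [1..<k + 1])"
    have F: "F \<in> carrier_mat 3 3" "map_mat complex_of_real F = holonomy k"
      using Suc unfolding F_def by auto
    have "Rm (k + 1) \<in> carrier_mat 3 3" using Suc Rm_orthogonal[of "k + 1"] by simp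
    moreover have "foldl (*) (1\<^sub>m 3) (map Rm [1..<Suc k + 1]) = F * Rm (k + 1)"
      unfolding F_def by simp
    ultimately show ?case using F by (simp add: of_real_hom.mat_hom_mult R_def)
  qed (simp add: of_real_hom.mat_hom_one)
  then show ?thesis unfolding cycle_error_def by simp
qed

definition twisted_shift_eigen :: "complex \<Rightarrow> (nat \<Rightarrow> complex vec) \<Rightarrow> bool" where
  "twisted_shift_eigen \<kappa> z \<longleftrightarrow> (\<forall>p<n. z p \<in> carrier_vec 3 \<and> R p *\<^sub>v z (nxt p) = \<kappa> \<cdot>\<^sub>v z p)"

lemma twisted_shift_eigen_transpose:
  assumes z: "twisted_shift_eigen \<kappa> z" and p: "p < n"
  shows "z (nxt p) = \<kappa> \<cdot>\<^sub>v (transpose_mat (R p) *\<^sub>v z p)"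
proof -
  have "z (nxt p) = transpose_mat (R p) *\<^sub>v (R p *\<^sub>v z (nxt p))"
    using R_transpose_cancel(1)[OF p] z nxt_less unfolding twisted_shift_eigen_def by simp
  also have "\<dots> = \<kappa> \<cdot>\<^sub>v (transpose_mat (R p) *\<^sub>v z p)"
    using z p R_carrier[OF p] unfolding twisted_shift_eigen_def by (simp add: mult_mat_vec)
  finally show ?thesis .
qed

lemma twisted_shift_eigen_adjoint:
  assumes z: "twisted_shift_eigen \<kappa> z" and \<kappa>: "\<kappa> \<noteq> 0" and p: "p < n"
  shows "transpose_mat (R (prv p)) *\<^sub>v z (prv p) = (1 / \<kappa>) \<cdot>\<^sub>v z p"
  using twisted_shift_eigen_transpose[OF z prv_less[of p]] \<kappa> nxt_prv[OF p] R_carrier[OF prv_less[of p]]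
    z prv_less[of p] unfolding twisted_shift_eigen_def
  by (auto simp: smult_smult_assoc)

lemma twisted_shift_eigen_start_nonzero:
  assumes z: "twisted_shift_eigen \<kappa> z" and nz: "\<exists>p<n. z p \<noteq> 0\<^sub>v 3"
  shows "z 0 \<noteq> 0\<^sub>v 3"
proof
  assume z0: "z 0 = 0\<^sub>v 3"
  have "z p = 0\<^sub>v 3" if "p < n" for p
    using that
  proof (induction p)
    case (Suc p)
    then have "z (Suc p) = \<kappa> \<cdot>\<^sub>v (transpose_mat (R p) *\<^sub>v 0\<^sub>v 3)"
      using twisted_shift_eigen_transpose[OF z, of p] by (simp add: nxt_eq)
    also have "\<dots> = 0\<^sub>v 3" using R_carrier[of p] Suc.prems by (intro eq_vecI) auto
    finally show ?case .
  qed (use z0 in simp)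
  then show False using nz by auto
qed

lemma holonomy_eigenvalue_of_twisted_shift_eigen:
  assumes z: "twisted_shift_eigen \<kappa> z" and nz: "\<exists>p<n. z p \<noteq> 0\<^sub>v 3"
  shows "eigenvalue (holonomy n) (\<kappa> ^ n)"
proof -
  have zc: "z p \<in> carrier_vec 3" if "p < n" for p using z that unfolding twisted_shift_eigen_def by simp
  have "holonomy (Suc k) *\<^sub>v z (nxt k) = \<kappa> ^ Suc k \<cdot>\<^sub>v z 0" if "k < n" for k
    using that
  proof (induction k)
    case 0
    then show ?case using z zc[of 0] R_carrier[of 0] unfolding twisted_shift_eigen_def by simp
  next
    case (Suc k)
    then have nxt_k: "nxt k = Suc k" by (simp add: nxt_eq)
    have H: "holonomy (Suc k) \<in> carrier_mat 3 3" by (rule holonomy_carrier) (use Suc.prems in simp)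
    have "holonomy (Suc (Suc k)) *\<^sub>v z (nxt (Suc k)) = holonomy (Suc k) *\<^sub>v (R (Suc k) *\<^sub>v z (nxt (Suc k)))"
      using H R_carrier[OF Suc.prems] zc[OF nxt_less] by simp
    also have "\<dots> = \<kappa> \<cdot>\<^sub>v (holonomy (Suc k) *\<^sub>v z (nxt k))"
      using z Suc.prems H zc[OF Suc.prems] unfolding twisted_shift_eigen_def nxt_k by (simp add: mult_mat_vec)
    also have "\<dots> = \<kappa> ^ Suc (Suc k) \<cdot>\<^sub>v z 0" using Suc by (simp add: smult_smult_assoc)
    finally show ?case .
  qed
  from this[of "n - 1"] have "holonomy n *\<^sub>v z 0 = \<kappa> ^ n \<cdot>\<^sub>v z 0"
    using three_le_n by (simp add: nxt_eq)
  then show ?thesis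
    using twisted_shift_eigen_start_nonzero[OF z nz] zc[of 0] three_le_n
      eigenvalue_carrier_iff[OF holonomy_carrier[of n]] by auto
qed

lemma twisted_shift_eigen_of_holonomy:
  assumes w: "w \<in> carrier_vec 3" and E: "holonomy n *\<^sub>v w = \<kappa> ^ n \<cdot>\<^sub>v w"
  shows "twisted_shift_eigen \<kappa> (\<lambda>p. \<kappa> ^ p \<cdot>\<^sub>v (transpose_mat (holonomy p) *\<^sub>v w))"
  unfolding twisted_shift_eigen_def
proof (intro allI impI conjI)
  fix p assume p: "p < n"
  then have H: "holonomy p \<in> carrier_mat 3 3" using holonomy_carrier by simp
  then show "\<kappa> ^ p \<cdot>\<^sub>v (transpose_mat (holonomy p) *\<^sub>v w) \<in> carrier_vec 3" using w by simp
  note Rp = R_carrier[OF p]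
  have "R p *\<^sub>v (transpose_mat (holonomy (nxt p)) *\<^sub>v w) = \<kappa> ^ (Suc p - nxt p) \<cdot>\<^sub>v (transpose_mat (holonomy p) *\<^sub>v w)"
  proof (cases "p + 1 = n")
    case False
    then have "nxt p = Suc p" using p by (simp add: nxt_eq)
    moreover have "transpose_mat (holonomy (Suc p)) *\<^sub>v w = transpose_mat (R p) *\<^sub>v (transpose_mat (holonomy p) *\<^sub>v w)"
      using H Rp w by (simp add: transpose_mult)
    ultimately show ?thesis using R_transpose_cancel(2)[OF p] H w by simp
  next
    case True
    then have "nxt p = 0" and Hn: "holonomy n = holonomy p * R p" using p by (auto simp: nxt_eq)
    have "R p *\<^sub>v w = (transpose_mat (holonomy p) * holonomy p) *\<^sub>v (R p *\<^sub>v w)"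
      using holonomy_orthogonal[of p] p Rp w by simp
    also have "\<dots> = transpose_mat (holonomy p) *\<^sub>v (holonomy n *\<^sub>v w)"
      unfolding Hn using H Rp w by simp
    also have "\<dots> = \<kappa> ^ n \<cdot>\<^sub>v (transpose_mat (holonomy p) *\<^sub>v w)"
      unfolding E using H w by (simp add: mult_mat_vec)
    finally show ?thesis using \<open>nxt p = 0\<close> True w by simp
  qed
  then show "R p *\<^sub>v (\<kappa> ^ nxt p \<cdot>\<^sub>v (transpose_mat (holonomy (nxt p)) *\<^sub>v w))
      = \<kappa> \<cdot>\<^sub>v (\<kappa> ^ p \<cdot>\<^sub>v (transpose_mat (holonomy p) *\<^sub>v w))"
    using Rp H w holonomy_carrier[OF less_imp_le[OF nxt_less[of p]]] p
    by (simp add: mult_mat_vec smult_smult_assoc nxt_eq power_add[symmetric] split: if_splits)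
qed

lemma M_eigen_of_twisted_shift_eigen:
  assumes z: "twisted_shift_eigen \<kappa> z" and \<kappa>: "\<kappa> \<noteq> 0"
  shows "M *\<^sub>v glue z = (1 + \<kappa> + 1 / \<kappa>) \<cdot>\<^sub>v glue z"
  unfolding M_eigen_iff_blocks[OF glue_carrier]
proof (intro allI impI)
  fix p assume p: "p < n"
  have zc: "z q \<in> carrier_vec 3" if "q < n" for q using z that unfolding twisted_shift_eigen_def by simp
  have glued: "block (glue z) q = z q" if "q < n" for q using that zc[OF that] by (rule block_glue)
  have shift: "R p *\<^sub>v z (nxt p) = \<kappa> \<cdot>\<^sub>v z p" using z p unfolding twisted_shift_eigen_def by simp
  show "block (glue z) p + R p *\<^sub>v block (glue z) (nxt p)
      + transpose_mat (R (prv p)) *\<^sub>v block (glue z) (prv p) = (1 + \<kappa> + 1 / \<kappa>) \<cdot>\<^sub>v block (glue z) p"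
    unfolding glued[OF p] glued[OF nxt_less] glued[OF prv_less] shift
      twisted_shift_eigen_adjoint[OF z \<kappa> p]
    using zc[OF p] by (intro eq_vecI) (simp_all add: algebra_simps)
qed

text \<open>For \<open>l = 1 + \<mu> + 1/\<mu>\<close> one has \<open>M - l = S\<^sup>-\<^sup>1 (S - \<mu>) (S - 1/\<mu>)\<close>, so the defect \<open>S x - x/\<mu>\<close> of a
  solution \<open>x\<close> of \<open>M x = l x\<close> is a \<open>\<mu>\<close>-eigenvector of \<open>S\<close>.\<close>
lemma twisted_shift_eigen_defect:
  assumes x: "\<And>p. p < n \<Longrightarrow> x p \<in> carrier_vec 3"
    and eq: "\<And>p. p < n \<Longrightarrow>
      x p + R p *\<^sub>v x (nxt p) + transpose_mat (R (prv p)) *\<^sub>v x (prv p) = (1 + \<mu> + 1 / \<mu>) \<cdot>\<^sub>v x p"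
    and \<mu>: "\<mu> \<noteq> 0"
  shows "twisted_shift_eigen \<mu> (\<lambda>p. R p *\<^sub>v x (nxt p) - (1 / \<mu>) \<cdot>\<^sub>v x p)"
  unfolding twisted_shift_eigen_def
proof (intro allI impI conjI)
  fix p assume p: "p < n"
  define s where "s = nxt p"
  have s: "s < n" unfolding s_def by (rule nxt_less)
  note Rp = R_carrier[OF p] and Rs = R_carrier[OF s] and xc = x[OF p] x[OF s] x[OF nxt_less[of s]]
  show "R p *\<^sub>v x (nxt p) - (1 / \<mu>) \<cdot>\<^sub>v x p \<in> carrier_vec 3"
    using Rp xc unfolding s_def[symmetric] by simp
  have "R s *\<^sub>v x (nxt s) = (1 + \<mu> + 1 / \<mu>) \<cdot>\<^sub>v x s - x s - transpose_mat (R p) *\<^sub>v x p"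
    using vec_add_add_eq_diff[OF _ _ _ _ eq[OF s]] prv_nxt[OF p] Rs Rp xc unfolding s_def by simp
  then have "R p *\<^sub>v (R s *\<^sub>v x (nxt s) - (1 / \<mu>) \<cdot>\<^sub>v x s)
      = R p *\<^sub>v ((1 + \<mu> + 1 / \<mu>) \<cdot>\<^sub>v x s - x s - transpose_mat (R p) *\<^sub>v x p - (1 / \<mu>) \<cdot>\<^sub>v x s)"
    by simp
  also have "\<dots> = (1 + \<mu> + 1 / \<mu>) \<cdot>\<^sub>v (R p *\<^sub>v x s) - R p *\<^sub>v x s - x p - (1 / \<mu>) \<cdot>\<^sub>v (R p *\<^sub>v x s)"
    using Rp xc by (simp add: mult_minus_distrib_mat_vec mult_mat_vec R_transpose_cancel(2)[OF p])
  also have "\<dots> = \<mu> \<cdot>\<^sub>v (R p *\<^sub>v x s - (1 / \<mu>) \<cdot>\<^sub>v x p)"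
    using Rp xc \<mu> by (intro eq_vecI) (simp_all add: algebra_simps)
  finally show "R p *\<^sub>v (R (nxt p) *\<^sub>v x (nxt (nxt p)) - (1 / \<mu>) \<cdot>\<^sub>v x (nxt p))
      = \<mu> \<cdot>\<^sub>v (R p *\<^sub>v x (nxt p) - (1 / \<mu>) \<cdot>\<^sub>v x p)"
    unfolding s_def .
qed

lemma twisted_shift_eigen_of_M_eigen:
  assumes v: "v \<in> carrier_vec (3 * n)" "v \<noteq> 0\<^sub>v (3 * n)" and ev: "M *\<^sub>v v = l \<cdot>\<^sub>v v"
  obtains \<kappa> z where "\<kappa> \<noteq> 0" "l = 1 + \<kappa> + 1 / \<kappa>" "twisted_shift_eigen \<kappa> z" "\<exists>p<n. z p \<noteq> 0\<^sub>v 3"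
proof -
  obtain \<mu> where \<mu>: "\<mu> \<noteq> 0" "\<mu> + 1 / \<mu> = l - 1" using exists_add_inverse_eq by blast
  then have l: "l = 1 + \<mu> + 1 / \<mu>" by (simp add: eq_diff_eq add_ac)
  define x where "x = block v"
  have xc: "x p \<in> carrier_vec 3" for p unfolding x_def by simp
  have eq: "x p + R p *\<^sub>v x (nxt p) + transpose_mat (R (prv p)) *\<^sub>v x (prv p) = (1 + \<mu> + 1 / \<mu>) \<cdot>\<^sub>v x p"
    if "p < n" for p
    using M_eigen_iff_blocks[OF v(1)] ev that unfolding x_def l by blast
  have x_nonzero: "\<exists>p<n. x p \<noteq> 0\<^sub>v 3" unfolding x_def by (rule block_nonzero[OF v])
  define y where "y p = R p *\<^sub>v x (nxt p) - (1 / \<mu>) \<cdot>\<^sub>v x p" for p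
  have y: "twisted_shift_eigen \<mu> y"
    unfolding y_def by (rule twisted_shift_eigen_defect[OF xc eq \<mu>(1)])
  show thesis
  proof (cases "\<exists>p<n. y p \<noteq> 0\<^sub>v 3")
    case True
    then show thesis using that[OF \<mu>(1) l y] by blast
  next
    case False
    then have "R p *\<^sub>v x (nxt p) = (1 / \<mu>) \<cdot>\<^sub>v x p" if "p < n" for p
      using that vec_diff_eq_0_iff[of "R p *\<^sub>v x (nxt p)" 3 "(1 / \<mu>) \<cdot>\<^sub>v x p"]
        R_carrier[OF that] xc unfolding y_def by auto
    then have "twisted_shift_eigen (1 / \<mu>) x"
      unfolding twisted_shift_eigen_def using xc by blast
    moreover have "l = 1 + 1 / \<mu> + 1 / (1 / \<mu>)" using l by simp
    ultimately show thesis using that[of "1 / \<mu>" x] \<mu>(1) x_nonzero by simp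
  qed
qed

lemma M_spectrum:
  "{l. eigenvalue M l} = (\<lambda>\<kappa>. 1 + \<kappa> + 1 / \<kappa>) ` {\<kappa>. \<kappa> \<noteq> 0 \<and> eigenvalue (holonomy n) (\<kappa> ^ n)}"
proof (intro equalityI subsetI)
  fix l assume "l \<in> {l. eigenvalue M l}"
  then obtain v where "v \<in> carrier_vec (3 * n)" "v \<noteq> 0\<^sub>v (3 * n)" "M *\<^sub>v v = l \<cdot>\<^sub>v v"
    using eigenvalue_carrier_iff[OF M_carrier] by auto
  then obtain \<kappa> z where "\<kappa> \<noteq> 0" "l = 1 + \<kappa> + 1 / \<kappa>" "twisted_shift_eigen \<kappa> z" "\<exists>p<n. z p \<noteq> 0\<^sub>v 3"
    by (rule twisted_shift_eigen_of_M_eigen)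
  then show "l \<in> (\<lambda>\<kappa>. 1 + \<kappa> + 1 / \<kappa>) ` {\<kappa>. \<kappa> \<noteq> 0 \<and> eigenvalue (holonomy n) (\<kappa> ^ n)}"
    using holonomy_eigenvalue_of_twisted_shift_eigen by blast
next
  fix l assume "l \<in> (\<lambda>\<kappa>. 1 + \<kappa> + 1 / \<kappa>) ` {\<kappa>. \<kappa> \<noteq> 0 \<and> eigenvalue (holonomy n) (\<kappa> ^ n)}"
  then obtain \<kappa> where \<kappa>: "\<kappa> \<noteq> 0" "l = 1 + \<kappa> + 1 / \<kappa>" and "eigenvalue (holonomy n) (\<kappa> ^ n)" by blast
  then obtain w where w: "w \<in> carrier_vec 3" "w \<noteq> 0\<^sub>v 3" "holonomy n *\<^sub>v w = \<kappa> ^ n \<cdot>\<^sub>v w"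
    using eigenvalue_carrier_iff[OF holonomy_carrier[of n]] by auto
  define z where "z p = \<kappa> ^ p \<cdot>\<^sub>v (transpose_mat (holonomy p) *\<^sub>v w)" for p
  have z: "twisted_shift_eigen \<kappa> z"
    unfolding z_def by (rule twisted_shift_eigen_of_holonomy[OF w(1,3)])
  have "block (glue z) 0 = w"
    using block_glue[of 0 z] three_le_n w(1) unfolding z_def by simp
  then have "glue z \<noteq> 0\<^sub>v (3 * n)"
    using w(2) three_le_n by (auto simp: block_def)
  then show "l \<in> {l. eigenvalue M l}"
    using M_eigen_of_twisted_shift_eigen[OF z \<kappa>(1)] glue_carrier \<kappa>(2)
      eigenvalue_carrier_iff[OF M_carrier] by auto
qed

end

theorem theorem3:
  fixes n :: nat and Rm :: "nat \<Rightarrow> real mat" and \<gamma> :: real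
  assumes "n \<ge> 3"
    and "\<And>i. i \<in> {1..n} \<Longrightarrow> Rm i \<in> SO3"
    and "is_rotation_angle (cycle_error n Rm) \<gamma>"
  shows "{z. eigenvalue (map_mat complex_of_real (cycle_matrix n Rm)) z} =
         (\<lambda>k. complex_of_real (1 + 2 * cos (\<gamma> / real n - 2 * real k * pi / real n))) ` {0..<n}
       \<union> (\<lambda>k. complex_of_real (1 + 2 * cos (2 * real k * pi / real n))) ` {0..<n}"
proof -
  interpret orthogonal_cycle n Rm
    using assms(1,2) unfolding SO3_def by unfold_locales auto
  obtain u where u: "u \<in> carrier_vec 3" "(u$0)\<^sup>2 + (u$1)\<^sup>2 + (u$2)\<^sup>2 = 1"
    and E: "cycle_error n Rm = rot_exp \<gamma> u"
    using assms(3) unfolding is_rotation_angle_def by blast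
  have n: "n > 0" using assms(1) by simp
  have "eigenvalue (holonomy n) c \<longleftrightarrow> c \<in> {1, cis \<gamma>, cis (-\<gamma>)}" for c
    using rot_exp_spectrum[OF u(2,1), of \<gamma>] unfolding of_real_cycle_error[symmetric] E by blast
  moreover have "\<kappa> \<noteq> 0" if "\<kappa> ^ n \<in> {1, cis \<gamma>, cis (-\<gamma>)}" for \<kappa>
  proof
    assume "\<kappa> = 0"
    then have "\<kappa> ^ n = 0" using n by simp
    with that show False by simp
  qed
  ultimately have "{z. eigenvalue M z} = (\<lambda>\<kappa>. 1 + \<kappa> + 1 / \<kappa>) ` {\<kappa>. \<kappa> ^ n \<in> {1, cis \<gamma>, cis (-\<gamma>)}}"
    unfolding M_spectrum by metis
  then show ?thesis
    unfolding M_def add_inverse_image_nth_roots[OF n] .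
qed

end
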